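(* (1) Let $C$ be a binary Euclidean LCD $[n,k]$ code with generator matrix $G$, let $\mathbf{x}\in C^{\perp_E}$, and let $C'$ be the binary linear code with generator matrix $G'=\begin{pmatrix}1&\mathbf{x}\\ \mathbf{0}&G\end{pmatrix}$. If $wt(\mathbf{x})$ is even, then $C'$ is a binary Euclidean LCD $[n+1,k+1]$ code. (2) Let $C$ be a ternary Euclidean LCD $[n,k]$ code with generator matrix $G$, let $\mathbf{x}\in C^{\perp_E}$, and let $C'$ be the ternary linear code with generator matrix $G'=\begin{pmatrix}1&\mathbf{x}\\ \mathbf{0}&G\end{pmatrix}$. If $wt(\mathbf{x})\not\equiv 2 \pmod 3$, then $C'$ is a ternary Euclidean LCD $[n+1,k+1]$ code. (3) Let $C$ be a quaternary Hermitian LCD $[n,k]$ code with generator matrix $G$, let $\mathbf{x}\in C^{\perp_H}$, and let $C'$ be the quaternary linear code with generator matrix $G'=\begin{pmatrix}1&\mathbf{x}\\ \mathbf{0}&G\end{pmatrix}$. If $wt(\mathbf{x})$ is even, then $C'$ is a quaternary Hermitian LCD $[n+1,k+1]$ code.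
   Context: Binary, ternary, quaternary codes are linear codes over $\mathbb{F}_2,\mathbb{F}_3,\mathbb{F}_4$. An $[n,k]$ code is a $k$-dimensional subspace of $\mathbb{F}_q^n$; a generator matrix is a $k\times n$ matrix whose rows form a basis. $wt(\mathbf{x})$ is the Hamming weight (number of nonzero coordinates). Euclidean inner product $\langle x,y\rangle_E=\sum x_iy_i$ with dual $C^{\perp_E}$; on $\mathbb{F}_4^n$ the Hermitian inner product is $\langle x,y\rangle_H=\sum x_iy_i^2$ with dual $C^{\perp_H}$. A code is (Euclidean/Hermitian) LCD if $C\cap C^{\perp}=\{0\}$. In $G'$, $\mathbf{0}$ denotes the zero column of length $k$. *)

theory Defs
  imports Main "HOL-Library.Cardinality"
begin

text \<open>Vectors of length n over a field are modelled as functions nat => 'a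
  that vanish at all coordinates j >= n.  A k x n matrix is a function
  nat => nat => 'a, entry (i,j) with i < k, j < n.\<close>

definition vecs :: "nat \<Rightarrow> (nat \<Rightarrow> 'a::zero) set" where
  "vecs n = {v. \<forall>j. n \<le> j \<longrightarrow> v j = 0}"

definition lincomb :: "nat \<Rightarrow> nat \<Rightarrow> (nat \<Rightarrow> nat \<Rightarrow> 'a::comm_ring_1) \<Rightarrow> (nat \<Rightarrow> 'a) \<Rightarrow> (nat \<Rightarrow> 'a)" where
  "lincomb k n G c = (\<lambda>j. if j < n then (\<Sum>i<k. c i * G i j) else 0)"

definition gen_code :: "nat \<Rightarrow> nat \<Rightarrow> (nat \<Rightarrow> nat \<Rightarrow> 'a::comm_ring_1) \<Rightarrow> (nat \<Rightarrow> 'a) set" where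
  "gen_code k n G = {lincomb k n G c | c. True}"

definition rows_indep :: "nat \<Rightarrow> nat \<Rightarrow> (nat \<Rightarrow> nat \<Rightarrow> 'a::comm_ring_1) \<Rightarrow> bool" where
  "rows_indep k n G \<longleftrightarrow> (\<forall>c. lincomb k n G c = (\<lambda>_. 0) \<longrightarrow> (\<forall>i<k. c i = 0))"

definition is_generator_matrix :: "nat \<Rightarrow> nat \<Rightarrow> (nat \<Rightarrow> nat \<Rightarrow> 'a::comm_ring_1) \<Rightarrow> (nat \<Rightarrow> 'a) set \<Rightarrow> bool" where
  "is_generator_matrix k n G C \<longleftrightarrow> rows_indep k n G \<and> C = gen_code k n G"

definition wt :: "nat \<Rightarrow> (nat \<Rightarrow> 'a::zero) \<Rightarrow> nat" where
  "wt n x = card {j. j < n \<and> x j \<noteq> 0}"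

definition ip_E :: "nat \<Rightarrow> (nat \<Rightarrow> 'a::comm_ring_1) \<Rightarrow> (nat \<Rightarrow> 'a) \<Rightarrow> 'a" where
  "ip_E n x y = (\<Sum>j<n. x j * y j)"

definition ip_H :: "nat \<Rightarrow> (nat \<Rightarrow> 'a::comm_ring_1) \<Rightarrow> (nat \<Rightarrow> 'a) \<Rightarrow> 'a" where
  "ip_H n x y = (\<Sum>j<n. x j * (y j) ^ 2)"

definition dual_E :: "nat \<Rightarrow> (nat \<Rightarrow> 'a::comm_ring_1) set \<Rightarrow> (nat \<Rightarrow> 'a) set" where
  "dual_E n C = {y \<in> vecs n. \<forall>x\<in>C. ip_E n x y = 0}"

definition dual_H :: "nat \<Rightarrow> (nat \<Rightarrow> 'a::comm_ring_1) set \<Rightarrow> (nat \<Rightarrow> 'a) set" where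
  "dual_H n C = {y \<in> vecs n. \<forall>x\<in>C. ip_H n x y = 0}"

definition LCD_E :: "nat \<Rightarrow> (nat \<Rightarrow> 'a::comm_ring_1) set \<Rightarrow> bool" where
  "LCD_E n C \<longleftrightarrow> C \<inter> dual_E n C = {\<lambda>_. 0}"

definition LCD_H :: "nat \<Rightarrow> (nat \<Rightarrow> 'a::comm_ring_1) set \<Rightarrow> bool" where
  "LCD_H n C \<longleftrightarrow> C \<inter> dual_H n C = {\<lambda>_. 0}"

definition ext_matrix :: "(nat \<Rightarrow> nat \<Rightarrow> 'a::comm_ring_1) \<Rightarrow> (nat \<Rightarrow> 'a) \<Rightarrow> nat \<Rightarrow> nat \<Rightarrow> 'a" where
  "ext_matrix G x i j =
     (if i = 0 then (if j = 0 then 1 else x (j - 1))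
      else (if j = 0 then 0 else G (i - 1) (j - 1)))"

end

theory Submission
  imports Defs "HOL-Computational_Algebra.Primes"
begin

text \<open>Both inner products are instances of the form \<open>\<langle>x, y\<rangle> = \<Sum>j. x\<^sub>j \<sigma>(y\<^sub>j)\<close> for an
  injective ring endomorphism \<open>\<sigma>\<close>: the identity, resp. the Frobenius map \<open>a \<mapsto> a\<^sup>2\<close> in
  characteristic 2. A codeword of \<open>C'\<close> has the form \<open>(a, a x + u)\<close> with \<open>u \<in> C\<close>. If it is
  orthogonal to \<open>C'\<close>, testing against the codewords \<open>(0, g)\<close>, \<open>g \<in> C\<close>, and using \<open>x \<perp> C\<close>
  shows \<open>u \<in> C \<inter> C\<^sup>\<perp> = 0\<close>; testing against the first row \<open>(1, x)\<close> then gives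
  \<open>\<sigma>(a) (1 + \<langle>x, x\<rangle>) = 0\<close>. Over GF(2), GF(3) and GF(4) every nonzero \<open>a\<close> satisfies
  \<open>a \<sigma>(a) = 1\<close>, so \<open>\<langle>x, x\<rangle> = wt(x)\<close> in the prime field, and the weight conditions say
  exactly that \<open>1 + wt(x) \<noteq> 0\<close> there.\<close>

lemma pow_card_minus_one_eq_1:
  fixes a :: "'a::{field,finite}"
  assumes "a \<noteq> 0"
  shows "a ^ (CARD('a) - 1) = 1"
proof -
  let ?U = "UNIV - {0::'a}"
  have "(\<Prod>y\<in>?U. a * y) = (\<Prod>y\<in>?U. y)"
    by (rule prod.reindex_bij_witness[of _ "\<lambda>y. y / a" "\<lambda>y. a * y"]) (use assms in auto)
  moreover have "(\<Prod>y\<in>?U. a * y) = a ^ card ?U * (\<Prod>y\<in>?U. y)"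
    by (simp add: prod.distrib)
  moreover have "(\<Prod>y\<in>?U. y) \<noteq> 0" and "card ?U = CARD('a) - 1"
    by (simp_all add: card_Diff_subset)
  ultimately show ?thesis
    by (metis mult_cancel_right1)
qed

lemma of_nat_card_eq_0: "(of_nat CARD('a) :: 'a::{ring_1,finite}) = 0"
proof -
  have "(\<Sum>y::'a\<in>UNIV. 1 + y) = (\<Sum>y\<in>UNIV. y)"
    by (rule sum.reindex_bij_witness[of _ "\<lambda>y. y - 1" "\<lambda>y. 1 + y"]) auto
  then show ?thesis
    by (simp add: sum.distrib)
qed

lemma CHAR_eq_if_CARD_eq_prime_power:
  assumes "CARD('a::{idom,finite}) = p ^ m" and "prime p"
  shows "CHAR('a) = p"
proof -
  have "prime CHAR('a)"
    by (simp add: finite_imp_CHAR_pos prime_CHAR_semidom)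
  moreover have "CHAR('a) dvd p ^ m"
    using of_nat_card_eq_0[where 'a='a] assms(1) of_nat_eq_0_iff_char_dvd by metis
  ultimately show ?thesis
    using assms(2) by (meson prime_dvd_power primes_dvd_imp_eq)
qed

lemma one_add_of_nat_eq_0_iff: "(1 + of_nat m :: 'a::semiring_1) = 0 \<longleftrightarrow> CHAR('a) dvd Suc m"
  by (metis of_nat_Suc of_nat_eq_0_iff_char_dvd)

lemma wt_Suc: "wt (Suc n) x = wt n x + (if x n = 0 then 0 else 1)"
proof -
  have "{j. j < Suc n \<and> x j \<noteq> 0} = {j. j < n \<and> x j \<noteq> 0} \<union> (if x n = 0 then {} else {n})"
    by (auto simp: less_Suc_eq)
  then show ?thesis
    by (simp add: wt_def)
qed

definition ext_vec :: "'a::comm_ring_1 \<Rightarrow> (nat \<Rightarrow> 'a) \<Rightarrow> (nat \<Rightarrow> 'a) \<Rightarrow> nat \<Rightarrow> 'a" where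
  "ext_vec a x u j = (if j = 0 then a else a * x (j - 1) + u (j - 1))"

lemma ext_vec_0 [simp]: "ext_vec a x u 0 = a"
  and ext_vec_Suc [simp]: "ext_vec a x u (Suc j) = a * x j + u j"
  by (simp_all add: ext_vec_def)

lemma ext_vec_zero: "ext_vec 0 x (\<lambda>_. 0) = (\<lambda>_. 0)"
  by (simp add: ext_vec_def fun_eq_iff)

lemma lincomb_ext_matrix:
  assumes "x \<in> vecs n"
  shows "lincomb (Suc k) (Suc n) (ext_matrix G x) c = ext_vec (c 0) x (lincomb k n G (\<lambda>i. c (Suc i)))"
proof
  fix j
  show "lincomb (Suc k) (Suc n) (ext_matrix G x) c j = ext_vec (c 0) x (lincomb k n G (\<lambda>i. c (Suc i))) j"
    using assms
    by (cases j) (simp_all add: lincomb_def ext_matrix_def vecs_def sum.lessThan_Suc_shift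
        del: sum.lessThan_Suc)
qed

lemma gen_code_ext_matrix:
  assumes "x \<in> vecs n"
  shows "gen_code (Suc k) (Suc n) (ext_matrix G x) = {ext_vec a x u | a u. u \<in> gen_code k n G}"
proof (intro equalityI subsetI)
  fix v assume "v \<in> gen_code (Suc k) (Suc n) (ext_matrix G x)"
  then show "v \<in> {ext_vec a x u | a u. u \<in> gen_code k n G}"
    using lincomb_ext_matrix[OF assms] unfolding gen_code_def by blast
next
  fix v assume "v \<in> {ext_vec a x u | a u. u \<in> gen_code k n G}"
  then obtain a c where v: "v = ext_vec a x (lincomb k n G c)"
    unfolding gen_code_def by blast
  have "lincomb (Suc k) (Suc n) (ext_matrix G x) (case_nat a c) = v"
    using lincomb_ext_matrix[OF assms, of k G "case_nat a c"] v by simp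
  then show "v \<in> gen_code (Suc k) (Suc n) (ext_matrix G x)"
    unfolding gen_code_def by blast
qed

lemma rows_indep_ext_matrix:
  assumes "x \<in> vecs n" and "rows_indep k n G"
  shows "rows_indep (Suc k) (Suc n) (ext_matrix G x)"
  unfolding rows_indep_def
proof (intro allI impI)
  fix c i assume "lincomb (Suc k) (Suc n) (ext_matrix G x) c = (\<lambda>_. 0)" and i: "i < Suc k"
  then have v0: "ext_vec (c 0) x (lincomb k n G (\<lambda>i. c (Suc i))) = (\<lambda>_. 0)"
    using lincomb_ext_matrix[OF assms(1)] by metis
  then have c0: "c 0 = 0"
    by (metis ext_vec_0)
  have "lincomb k n G (\<lambda>i. c (Suc i)) = (\<lambda>_. 0)"
    using fun_cong[OF v0, of "Suc _"] c0 by auto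
  then have "\<forall>i<k. c (Suc i) = 0"
    using assms(2) unfolding rows_indep_def by blast
  with c0 i show "c i = 0"
    by (cases i) auto
qed

lemma gen_code_subset_vecs: "gen_code k n G \<subseteq> vecs n"
  by (auto simp: gen_code_def vecs_def lincomb_def)

lemma zero_in_gen_code: "(\<lambda>_. 0) \<in> gen_code k n G"
proof -
  have "lincomb k n G (\<lambda>_. 0) = (\<lambda>_. 0)"
    by (simp add: lincomb_def fun_eq_iff)
  then show ?thesis
    unfolding gen_code_def by (metis (mono_tags, lifting) mem_Collect_eq)
qed

definition sesq_ip :: "('a::comm_ring_1 \<Rightarrow> 'a) \<Rightarrow> nat \<Rightarrow> (nat \<Rightarrow> 'a) \<Rightarrow> (nat \<Rightarrow> 'a) \<Rightarrow> 'a" where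
  "sesq_ip \<sigma> n x y = (\<Sum>j<n. x j * \<sigma> (y j))"

definition sesq_dual :: "('a::comm_ring_1 \<Rightarrow> 'a) \<Rightarrow> nat \<Rightarrow> (nat \<Rightarrow> 'a) set \<Rightarrow> (nat \<Rightarrow> 'a) set" where
  "sesq_dual \<sigma> n C = {y \<in> vecs n. \<forall>x\<in>C. sesq_ip \<sigma> n x y = 0}"

definition sesq_LCD :: "('a::comm_ring_1 \<Rightarrow> 'a) \<Rightarrow> nat \<Rightarrow> (nat \<Rightarrow> 'a) set \<Rightarrow> bool" where
  "sesq_LCD \<sigma> n C \<longleftrightarrow> C \<inter> sesq_dual \<sigma> n C = {\<lambda>_. 0}"

lemma ip_E_eq_sesq_ip: "ip_E n = sesq_ip id n"
  by (simp add: fun_eq_iff ip_E_def sesq_ip_def)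

lemma ip_H_eq_sesq_ip: "ip_H n = sesq_ip (\<lambda>a. a ^ 2) n"
  by (simp add: fun_eq_iff ip_H_def sesq_ip_def)

lemma dual_E_eq_sesq_dual: "dual_E n = sesq_dual id n"
  by (simp add: fun_eq_iff dual_E_def sesq_dual_def ip_E_eq_sesq_ip)

lemma dual_H_eq_sesq_dual: "dual_H n = sesq_dual (\<lambda>a. a ^ 2) n"
  by (simp add: fun_eq_iff dual_H_def sesq_dual_def ip_H_eq_sesq_ip)

lemma LCD_E_iff_sesq_LCD: "LCD_E n C \<longleftrightarrow> sesq_LCD id n C"
  by (simp add: LCD_E_def sesq_LCD_def dual_E_eq_sesq_dual)

lemma LCD_H_iff_sesq_LCD: "LCD_H n C \<longleftrightarrow> sesq_LCD (\<lambda>a. a ^ 2) n C"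
  by (simp add: LCD_H_def sesq_LCD_def dual_H_eq_sesq_dual)

lemma sesq_ip_Suc_shift:
  "sesq_ip \<sigma> (Suc n) x y = x 0 * \<sigma> (y 0) + sesq_ip \<sigma> n (\<lambda>j. x (Suc j)) (\<lambda>j. y (Suc j))"
  by (simp add: sesq_ip_def sum.lessThan_Suc_shift del: sum.lessThan_Suc)

lemma sesq_ip_self_eq_wt:
  assumes "\<And>a. a \<noteq> 0 \<Longrightarrow> a * \<sigma> a = 1"
  shows "sesq_ip \<sigma> n x x = of_nat (wt n x)"
proof (induction n)
  case 0
  then show ?case by (simp add: sesq_ip_def wt_def)
next
  case (Suc n)
  then show ?case
    using assms[of "x n"] by (simp add: sesq_ip_def wt_Suc)
qed

context
  fixes \<sigma> :: "'a::idom \<Rightarrow> 'a"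
  assumes \<sigma>_add: "\<And>a b. \<sigma> (a + b) = \<sigma> a + \<sigma> b"
    and \<sigma>_mult: "\<And>a b. \<sigma> (a * b) = \<sigma> a * \<sigma> b"
begin

lemma \<sigma>_zero: "\<sigma> 0 = 0"
  using \<sigma>_add[of 0 0] by (metis add.right_neutral add_left_cancel)

lemma sesq_ip_add_right: "sesq_ip \<sigma> n x (\<lambda>j. y j + z j) = sesq_ip \<sigma> n x y + sesq_ip \<sigma> n x z"
  by (simp add: sesq_ip_def \<sigma>_add algebra_simps sum.distrib)

lemma sesq_ip_scale_right: "sesq_ip \<sigma> n x (\<lambda>j. a * y j) = \<sigma> a * sesq_ip \<sigma> n x y"
  by (simp add: sesq_ip_def \<sigma>_mult algebra_simps sum_distrib_left)

lemma sesq_LCD_ext_matrix: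
  assumes \<sigma>_kernel: "\<And>a. \<sigma> a = 0 \<Longrightarrow> a = 0"
    and C: "C = gen_code k n G" and LCD: "sesq_LCD \<sigma> n C"
    and x: "x \<in> sesq_dual \<sigma> n C" and self: "1 + sesq_ip \<sigma> n x x \<noteq> 0"
  shows "sesq_LCD \<sigma> (Suc n) (gen_code (Suc k) (Suc n) (ext_matrix G x))"
proof -
  let ?C' = "gen_code (Suc k) (Suc n) (ext_matrix G x)"
  have x_vec: "x \<in> vecs n" and x_orth: "\<And>g. g \<in> C \<Longrightarrow> sesq_ip \<sigma> n g x = 0"
    using x by (auto simp: sesq_dual_def)
  have C': "?C' = {ext_vec a x u | a u. u \<in> C}"
    using gen_code_ext_matrix[OF x_vec] C by simp
  have "v = (\<lambda>_. 0)" if v: "v \<in> ?C' \<inter> sesq_dual \<sigma> (Suc n) ?C'" for v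
  proof -
    obtain a u where v_eq: "v = ext_vec a x u" and u: "u \<in> C"
      using v C' by blast
    have v_orth: "sesq_ip \<sigma> (Suc n) w v = 0" if "w \<in> ?C'" for w
      using v that by (simp add: sesq_dual_def)
    have "sesq_ip \<sigma> n g u = 0" if g: "g \<in> C" for g
    proof -
      have "ext_vec 0 x g \<in> ?C'"
        using C' g by blast
      from v_orth[OF this] have "\<sigma> a * sesq_ip \<sigma> n g x + sesq_ip \<sigma> n g u = 0"
        by (simp add: v_eq sesq_ip_Suc_shift sesq_ip_add_right sesq_ip_scale_right)
      then show ?thesis
        using x_orth[OF g] by simp
    qed
    moreover have "u \<in> vecs n"
      using u C gen_code_subset_vecs by blast
    ultimately have "u \<in> C \<inter> sesq_dual \<sigma> n C"
      using u by (simp add: sesq_dual_def)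
    then have u0: "u = (\<lambda>_. 0)"
      using LCD unfolding sesq_LCD_def by blast
    have "ext_vec 1 x (\<lambda>_. 0) \<in> ?C'"
      using C' zero_in_gen_code C by blast
    from v_orth[OF this] have "\<sigma> a * (1 + sesq_ip \<sigma> n x x) = 0"
      by (simp add: v_eq u0 sesq_ip_Suc_shift sesq_ip_add_right sesq_ip_scale_right
          algebra_simps)
    then have "a = 0"
      using self \<sigma>_kernel by simp
    then show ?thesis
      using v_eq u0 ext_vec_zero by simp
  qed
  moreover have "(\<lambda>_. 0) \<in> ?C' \<inter> sesq_dual \<sigma> (Suc n) ?C'"
    using zero_in_gen_code by (simp add: sesq_dual_def vecs_def sesq_ip_def \<sigma>_zero)
  ultimately show ?thesis
    unfolding sesq_LCD_def by blast
qed

end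

lemma is_generator_matrix_ext_matrix:
  assumes "is_generator_matrix k n G C" and "x \<in> vecs n"
  shows "is_generator_matrix (k + 1) (n + 1) (ext_matrix G x) (gen_code (k + 1) (n + 1) (ext_matrix G x))"
  using assms(1) rows_indep_ext_matrix[OF assms(2)] by (simp add: is_generator_matrix_def)

lemma LCD_E_ext_matrix:
  fixes G :: "nat \<Rightarrow> nat \<Rightarrow> 'a::idom"
  assumes "is_generator_matrix k n G C" and "LCD_E n C" and "x \<in> dual_E n C"
    and "1 + ip_E n x x \<noteq> 0"
  shows "is_generator_matrix (k + 1) (n + 1) (ext_matrix G x) (gen_code (k + 1) (n + 1) (ext_matrix G x))
    \<and> LCD_E (n + 1) (gen_code (k + 1) (n + 1) (ext_matrix G x))"
  using assms is_generator_matrix_ext_matrix[OF assms(1)] sesq_LCD_ext_matrix[of id C k n G x]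
  by (simp add: is_generator_matrix_def LCD_E_iff_sesq_LCD dual_E_eq_sesq_dual ip_E_eq_sesq_ip
      sesq_dual_def)

lemma LCD_H_ext_matrix:
  fixes G :: "nat \<Rightarrow> nat \<Rightarrow> 'a::idom"
  assumes "CHAR('a) = 2"
    and "is_generator_matrix k n G C" and "LCD_H n C" and "x \<in> dual_H n C"
    and "1 + ip_H n x x \<noteq> 0"
  shows "is_generator_matrix (k + 1) (n + 1) (ext_matrix G x) (gen_code (k + 1) (n + 1) (ext_matrix G x))
    \<and> LCD_H (n + 1) (gen_code (k + 1) (n + 1) (ext_matrix G x))"
proof -
  have "(a + b) ^ 2 = a ^ 2 + b ^ 2" for a b :: 'a
    using of_nat_CHAR[where 'a='a] assms(1) by (simp add: power2_sum)
  then show ?thesis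
    using assms(2-) is_generator_matrix_ext_matrix[OF assms(2)]
      sesq_LCD_ext_matrix[of "\<lambda>a. a ^ 2" C k n G x]
    by (simp add: is_generator_matrix_def LCD_H_iff_sesq_LCD dual_H_eq_sesq_dual ip_H_eq_sesq_ip
        sesq_dual_def power_mult_distrib)
qed

lemma one_add_ip_E_self_neq_0_if_CARD_2:
  fixes x :: "nat \<Rightarrow> 'a::{field,finite}"
  assumes "CARD('a) = 2" and "even (wt n x)"
  shows "1 + ip_E n x x \<noteq> 0"
proof -
  have "a * a = 1" if "a \<noteq> 0" for a :: 'a
    using pow_card_minus_one_eq_1[OF that] assms(1) by simp
  then have "ip_E n x x = of_nat (wt n x)"
    by (simp add: ip_E_eq_sesq_ip sesq_ip_self_eq_wt)
  moreover have "CHAR('a) = 2"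
    using CHAR_eq_if_CARD_eq_prime_power[where 'a='a, of 2 1] assms(1) by simp
  ultimately show ?thesis
    using assms(2) by (simp add: one_add_of_nat_eq_0_iff)
qed

lemma one_add_ip_E_self_neq_0_if_CARD_3:
  fixes x :: "nat \<Rightarrow> 'a::{field,finite}"
  assumes "CARD('a) = 3" and "wt n x mod 3 \<noteq> 2"
  shows "1 + ip_E n x x \<noteq> 0"
proof -
  have "a * a = 1" if "a \<noteq> 0" for a :: 'a
    using pow_card_minus_one_eq_1[OF that] assms(1) by (simp add: power2_eq_square)
  then have "ip_E n x x = of_nat (wt n x)"
    by (simp add: ip_E_eq_sesq_ip sesq_ip_self_eq_wt)
  moreover have "CHAR('a) = 3"
    using CHAR_eq_if_CARD_eq_prime_power[where 'a='a, of 3 1] assms(1) by simp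
  ultimately show ?thesis
    using assms(2) by (simp add: one_add_of_nat_eq_0_iff) presburger
qed

lemma one_add_ip_H_self_neq_0_if_CARD_4:
  fixes x :: "nat \<Rightarrow> 'a::{field,finite}"
  assumes "CARD('a) = 4" and "even (wt n x)"
  shows "1 + ip_H n x x \<noteq> 0"
proof -
  have "a * a ^ 2 = 1" if "a \<noteq> 0" for a :: 'a
    using pow_card_minus_one_eq_1[OF that] assms(1) by (simp add: numeral_3_eq_3 power2_eq_square)
  then have "ip_H n x x = of_nat (wt n x)"
    by (simp add: ip_H_eq_sesq_ip sesq_ip_self_eq_wt)
  moreover have "CHAR('a) = 2"
    using CHAR_eq_if_CARD_eq_prime_power[where 'a='a, of 2 2] assms(1) by simp
  ultimately show ?thesis
    using assms(2) by (simp add: one_add_of_nat_eq_0_iff)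
qed

theorem theorem3p5:
  fixes G2 :: "nat \<Rightarrow> nat \<Rightarrow> 'a::{field,finite}" and C2 :: "(nat \<Rightarrow> 'a) set" and x2 :: "nat \<Rightarrow> 'a"
    and G3 :: "nat \<Rightarrow> nat \<Rightarrow> 'b::{field,finite}" and C3 :: "(nat \<Rightarrow> 'b) set" and x3 :: "nat \<Rightarrow> 'b"
    and G4 :: "nat \<Rightarrow> nat \<Rightarrow> 'c::{field,finite}" and C4 :: "(nat \<Rightarrow> 'c) set" and x4 :: "nat \<Rightarrow> 'c"
    and n k :: nat
  shows
   "(CARD('a) = 2 \<and> is_generator_matrix k n G2 C2 \<and> LCD_E n C2 \<and> x2 \<in> dual_E n C2
       \<and> even (wt n x2)
     \<longrightarrow> is_generator_matrix (k+1) (n+1) (ext_matrix G2 x2) (gen_code (k+1) (n+1) (ext_matrix G2 x2))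
       \<and> LCD_E (n+1) (gen_code (k+1) (n+1) (ext_matrix G2 x2)))
  \<and> (CARD('b) = 3 \<and> is_generator_matrix k n G3 C3 \<and> LCD_E n C3 \<and> x3 \<in> dual_E n C3
       \<and> wt n x3 mod 3 \<noteq> 2
     \<longrightarrow> is_generator_matrix (k+1) (n+1) (ext_matrix G3 x3) (gen_code (k+1) (n+1) (ext_matrix G3 x3))
       \<and> LCD_E (n+1) (gen_code (k+1) (n+1) (ext_matrix G3 x3)))
  \<and> (CARD('c) = 4 \<and> is_generator_matrix k n G4 C4 \<and> LCD_H n C4 \<and> x4 \<in> dual_H n C4
       \<and> even (wt n x4)
     \<longrightarrow> is_generator_matrix (k+1) (n+1) (ext_matrix G4 x4) (gen_code (k+1) (n+1) (ext_matrix G4 x4))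
       \<and> LCD_H (n+1) (gen_code (k+1) (n+1) (ext_matrix G4 x4)))"
proof -
  have "CARD('c) = 4 \<Longrightarrow> CHAR('c) = 2"
    using CHAR_eq_if_CARD_eq_prime_power[where 'a='c, of 2 2] by simp
  then show ?thesis
    using LCD_E_ext_matrix[of k n G2 C2 x2] one_add_ip_E_self_neq_0_if_CARD_2[of n x2]
      LCD_E_ext_matrix[of k n G3 C3 x3] one_add_ip_E_self_neq_0_if_CARD_3[of n x3]
      LCD_H_ext_matrix[of k n G4 C4 x4] one_add_ip_H_self_neq_0_if_CARD_4[of n x4]
    by blast
qed

end
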